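(* In the setting below, let $\lambda\in\bar\Sigma_1$ with $\langle\lambda,\lambda\rangle=0$. For every $z\in\mathbb C$, the algebra automorphism $p\mapsto p(\cdot+z\lambda)$ of $S(\mathfrak a_\lambda)$ (viewed as polynomial functions on $\mathfrak a_\lambda^*$, with $\lambda$ restricted to $\mathfrak a_\lambda$) maps $I_{\lambda,\mathfrak m_\lambda}$ into itself.
   Context: $(\mathfrak g,\mathfrak k,\theta)$ strongly reductive symmetric superpair of even type with even Cartan subspace $\mathfrak a$ (definitions: $\mathfrak g$ finite-dimensional complex Lie superalgebra, $\theta$ even involution with eigenspaces $\mathfrak k$ ($+1$), $\mathfrak p$ ($-1$), $\mathfrak g$ semisimple as $\mathfrak g_0$-module, $\mathfrak z(\mathfrak g)\subset\mathfrak g_0$, fixed non-degenerate even supersymmetric $\mathfrak g$- and $\theta$-invariant form $b$, $[\mathfrak g,\mathfrak g]$ a sum of $b$-non-degenerate simple graded ideals; $\mathfrak a\subset\mathfrak p_0$, $\mathfrak a=\mathfrak z_{\mathfrak p}(\mathfrak a)$, $\operatorname{ad}\mathfrak a|_{\mathfrak g_0}$ semisimple). $\mathfrak g_j^\lambda$: $\lambda$-weight space in $\mathfrak g_j$; $\Sigma_j$ nonzero weights in $\mathfrak g_j$; $\bar\Sigma_1=\{\lambda\in\Sigma_1:2\lambda\notin\Sigma_0\}$; $A_\lambda\in\mathfrak a$ with $b(A_\lambda,h)=\lambda(h)$; $\langle\lambda,\lambda\rangle=b(A_\lambda,A_\lambda)$. For isotropic $\lambda\in\bar\Sigma_1$: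 $\mathfrak k_1^\lambda,\mathfrak p_1^\lambda$ are the intersections of $\mathfrak g_1^\lambda\oplus\mathfrak g_1^{-\lambda}$ with $\mathfrak k,\mathfrak p$; $\mathfrak k_\lambda=[\mathfrak k_1^\lambda,\mathfrak k_1^\lambda]\oplus\mathfrak k_1^\lambda$; $h_0\in\mathfrak a$ is fixed with $\lambda(h_0)=1$, $b(h_0,h_0)=0$; $\mathfrak a_\lambda=\mathbb Ch_0\oplus\mathbb CA_\lambda$; $\mathfrak p_\lambda=\mathfrak a_\lambda\oplus\mathfrak p_1^\lambda$ (stable under $\operatorname{ad}\mathfrak k_\lambda$); $I_{\lambda,\mathfrak m_\lambda}\subset S(\mathfrak a_\lambda)$ is the image of $S(\mathfrak p_\lambda)^{\mathfrak k_\lambda}$ under the projection $S(\mathfrak p_\lambda)=S(\mathfrak a_\lambda)\oplus\mathfrak p_1^\lambda S(\mathfrak p_\lambda)\to S(\mathfrak a_\lambda)$. *)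

theory Defs
  imports Complex_Main
begin

text \<open>A complex vector space is a type of class ab_group_add together with a scalar
multiplication sc satisfying the axioms of the locale vector_space.\<close>

definition fin_dim :: "(complex \<Rightarrow> 'g::ab_group_add \<Rightarrow> 'g) \<Rightarrow> bool" where
  "fin_dim sc \<longleftrightarrow> (\<exists>B. finite B \<and> module.span sc B = UNIV)"

definition set_plus :: "'g::ab_group_add set \<Rightarrow> 'g set \<Rightarrow> 'g set" where
  "set_plus U V = {u + v | u v. u \<in> U \<and> v \<in> V}"

section \<open>Lie superalgebras\<close>

definition grd :: "'g set \<Rightarrow> 'g set \<Rightarrow> nat \<Rightarrow> 'g set" where
  "grd g0 g1 i = (if i = 0 then g0 else g1)"

definition super_vs :: "(complex \<Rightarrow> 'g::ab_group_add \<Rightarrow> 'g) \<Rightarrow> 'g set \<Rightarrow> 'g set \<Rightarrow> bool" where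
  "super_vs sc g0 g1 \<longleftrightarrow> vector_space sc \<and> module.subspace sc g0 \<and> module.subspace sc g1
     \<and> g0 \<inter> g1 = {0} \<and> set_plus g0 g1 = UNIV"

definition lie_superalgebra ::
  "(complex \<Rightarrow> 'g::ab_group_add \<Rightarrow> 'g) \<Rightarrow> 'g set \<Rightarrow> 'g set \<Rightarrow> ('g \<Rightarrow> 'g \<Rightarrow> 'g) \<Rightarrow> bool" where
  "lie_superalgebra sc g0 g1 br \<longleftrightarrow> super_vs sc g0 g1
     \<and> (\<forall>x. Vector_Spaces.linear sc sc (br x)) \<and> (\<forall>y. Vector_Spaces.linear sc sc (\<lambda>x. br x y))
     \<and> (\<forall>i\<in>{0,1}. \<forall>j\<in>{0,1}. \<forall>x\<in>grd g0 g1 i. \<forall>y\<in>grd g0 g1 j.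
           br x y \<in> grd g0 g1 ((i + j) mod 2)
         \<and> br x y = - sc ((-1) ^ (i * j)) (br y x)
         \<and> (\<forall>z. br x (br y z) = br (br x y) z + sc ((-1) ^ (i * j)) (br y (br x z))))"

definition graded :: "(complex \<Rightarrow> 'g::ab_group_add \<Rightarrow> 'g) \<Rightarrow> 'g set \<Rightarrow> 'g set \<Rightarrow> 'g set \<Rightarrow> bool" where
  "graded sc g0 g1 I \<longleftrightarrow> module.subspace sc I \<and> I = set_plus (I \<inter> g0) (I \<inter> g1)"

definition graded_ideal_of ::
  "(complex \<Rightarrow> 'g::ab_group_add \<Rightarrow> 'g) \<Rightarrow> 'g set \<Rightarrow> 'g set \<Rightarrow> ('g \<Rightarrow> 'g \<Rightarrow> 'g) \<Rightarrow> 'g set \<Rightarrow> 'g set \<Rightarrow> bool" where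
  "graded_ideal_of sc g0 g1 br L J \<longleftrightarrow> graded sc g0 g1 J \<and> J \<subseteq> L \<and> (\<forall>x\<in>L. \<forall>y\<in>J. br x y \<in> J)"

definition simple_graded_ideal ::
  "(complex \<Rightarrow> 'g::ab_group_add \<Rightarrow> 'g) \<Rightarrow> 'g set \<Rightarrow> 'g set \<Rightarrow> ('g \<Rightarrow> 'g \<Rightarrow> 'g) \<Rightarrow> 'g set \<Rightarrow> bool" where
  "simple_graded_ideal sc g0 g1 br I \<longleftrightarrow> graded_ideal_of sc g0 g1 br UNIV I
     \<and> (\<exists>x\<in>I. \<exists>y\<in>I. br x y \<noteq> 0)
     \<and> (\<forall>J. graded_ideal_of sc g0 g1 br I J \<longrightarrow> J = {0} \<or> J = I)"

definition nondeg_on :: "('g \<Rightarrow> 'g \<Rightarrow> complex) \<Rightarrow> 'g::zero set \<Rightarrow> bool" where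
  "nondeg_on b V \<longleftrightarrow> (\<forall>x\<in>V. (\<forall>y\<in>V. b x y = 0) \<longrightarrow> x = 0)"

section \<open>Strongly reductive symmetric superpairs of even type\<close>

definition kset :: "('g \<Rightarrow> 'g) \<Rightarrow> 'g set" where "kset \<theta> = {x. \<theta> x = x}"
definition pset :: "('g \<Rightarrow> 'g::uminus) \<Rightarrow> 'g set" where "pset \<theta> = {x. \<theta> x = - x}"

definition strongly_reductive_superpair ::
  "(complex \<Rightarrow> 'g::ab_group_add \<Rightarrow> 'g) \<Rightarrow> 'g set \<Rightarrow> 'g set \<Rightarrow> ('g \<Rightarrow> 'g \<Rightarrow> 'g)
     \<Rightarrow> ('g \<Rightarrow> 'g) \<Rightarrow> ('g \<Rightarrow> 'g \<Rightarrow> complex) \<Rightarrow> bool" where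
  "strongly_reductive_superpair sc g0 g1 br \<theta> b \<longleftrightarrow>
     lie_superalgebra sc g0 g1 br \<and> fin_dim sc
     \<comment> \<open>theta is an even involutive automorphism\<close>
     \<and> Vector_Spaces.linear sc sc \<theta> \<and> (\<forall>x. \<theta> (\<theta> x) = x)
     \<and> \<theta> ` g0 \<subseteq> g0 \<and> \<theta> ` g1 \<subseteq> g1 \<and> (\<forall>x y. \<theta> (br x y) = br (\<theta> x) (\<theta> y))
     \<comment> \<open>g is semisimple as a g0-module\<close>
     \<and> (\<forall>W. module.subspace sc W \<and> (\<forall>x\<in>g0. \<forall>w\<in>W. br x w \<in> W) \<longrightarrow>
          (\<exists>W'. module.subspace sc W' \<and> (\<forall>x\<in>g0. \<forall>w\<in>W'. br x w \<in> W')
                \<and> W \<inter> W' = {0} \<and> set_plus W W' = UNIV))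
     \<comment> \<open>the centre is even\<close>
     \<and> {x. \<forall>y. br x y = 0} \<subseteq> g0
     \<comment> \<open>b: even, supersymmetric, non-degenerate, g- and theta-invariant bilinear form\<close>
     \<and> (\<forall>x. Vector_Spaces.linear sc (*) (b x)) \<and> (\<forall>y. Vector_Spaces.linear sc (*) (\<lambda>x. b x y))
     \<and> (\<forall>x\<in>g0. \<forall>y\<in>g1. b x y = 0)
     \<and> (\<forall>i\<in>{0,1}. \<forall>j\<in>{0,1}. \<forall>x\<in>grd g0 g1 i. \<forall>y\<in>grd g0 g1 j. b x y = (-1) ^ (i * j) * b y x)
     \<and> nondeg_on b UNIV
     \<and> (\<forall>x y z. b (br x y) z = b x (br y z))
     \<and> (\<forall>x y. b (\<theta> x) (\<theta> y) = b x y)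
     \<comment> \<open>[g,g] is a sum of b-non-degenerate simple graded ideals\<close>
     \<and> (\<exists>\<I>. finite \<I> \<and> (\<forall>I\<in>\<I>. simple_graded_ideal sc g0 g1 br I \<and> nondeg_on b I)
            \<and> module.span sc {br x y | x y. True} = module.span sc (\<Union>\<I>))"

definition even_cartan_even_type ::
  "(complex \<Rightarrow> 'g::ab_group_add \<Rightarrow> 'g) \<Rightarrow> 'g set \<Rightarrow> 'g set \<Rightarrow> ('g \<Rightarrow> 'g \<Rightarrow> 'g)
     \<Rightarrow> ('g \<Rightarrow> 'g) \<Rightarrow> 'g set \<Rightarrow> bool" where
  "even_cartan_even_type sc g0 g1 br \<theta> a \<longleftrightarrow>
     module.subspace sc a \<and> a \<subseteq> pset \<theta> \<inter> g0
     \<and> a = {x\<in>pset \<theta>. \<forall>h\<in>a. br h x = 0}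
     \<and> (\<forall>h\<in>a. g0 \<subseteq> module.span sc {x\<in>g0. \<exists>c. br h x = sc c x})"

section \<open>Restricted roots\<close>

text \<open>Weight space g_j^mu (only the values of mu on a matter).\<close>
definition wsp :: "(complex \<Rightarrow> 'g::ab_group_add \<Rightarrow> 'g) \<Rightarrow> 'g set \<Rightarrow> 'g set \<Rightarrow> ('g \<Rightarrow> 'g \<Rightarrow> 'g)
     \<Rightarrow> 'g set \<Rightarrow> nat \<Rightarrow> ('g \<Rightarrow> complex) \<Rightarrow> 'g set" where
  "wsp sc g0 g1 br a j \<mu> = {x\<in>grd g0 g1 j. \<forall>h\<in>a. br h x = sc (\<mu> h) x}"

definition is_root :: "(complex \<Rightarrow> 'g::ab_group_add \<Rightarrow> 'g) \<Rightarrow> 'g set \<Rightarrow> 'g set \<Rightarrow> ('g \<Rightarrow> 'g \<Rightarrow> 'g)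
     \<Rightarrow> 'g set \<Rightarrow> nat \<Rightarrow> ('g \<Rightarrow> complex) \<Rightarrow> bool" where
  "is_root sc g0 g1 br a j \<mu> \<longleftrightarrow> (\<exists>h\<in>a. \<mu> h \<noteq> 0) \<and> wsp sc g0 g1 br a j \<mu> \<noteq> {0}"

definition is_bar_root1 :: "(complex \<Rightarrow> 'g::ab_group_add \<Rightarrow> 'g) \<Rightarrow> 'g set \<Rightarrow> 'g set \<Rightarrow> ('g \<Rightarrow> 'g \<Rightarrow> 'g)
     \<Rightarrow> 'g set \<Rightarrow> ('g \<Rightarrow> complex) \<Rightarrow> bool" where
  "is_bar_root1 sc g0 g1 br a lam \<longleftrightarrow> is_root sc g0 g1 br a 1 lam
     \<and> \<not> (\<exists>\<mu>. is_root sc g0 g1 br a 0 \<mu> \<and> (\<forall>h\<in>a. \<mu> h = 2 * lam h))"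

section \<open>Supersymmetric algebra in coordinates\<close>

text \<open>For a super vector space with an ordered basis of m even vectors and n odd vectors,
  S(V) = C[x_0..x_{m-1}] tensor Lambda(xi_0..xi_{n-1}).  A monomial x^alpha xi_S
  (with xi_S = xi_{s_1}...xi_{s_r}, s_1 < ... < s_r) is a pair (alpha, S); an element is a
  finitely supported coefficient function.\<close>

type_synonym smon = "(nat \<Rightarrow> nat) \<times> nat set"

definition ssupp :: "('m \<Rightarrow> complex) \<Rightarrow> 'm set" where
  "ssupp F = {u. F u \<noteq> 0}"

definition spoly :: "nat \<Rightarrow> nat \<Rightarrow> (smon \<Rightarrow> complex) set" where
  "spoly m n = {F. finite (ssupp F) \<and> (\<forall>u\<in>ssupp F. (\<forall>i\<ge>m. fst u i = 0) \<and> snd u \<subseteq> {..<n})}"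

text \<open>Sign of reordering xi_S xi_T into increasing order.\<close>
definition ssign :: "nat set \<Rightarrow> nat set \<Rightarrow> complex" where
  "ssign S T = (-1) ^ card {(s, t). s \<in> S \<and> t \<in> T \<and> t < s}"

definition smult :: "(smon \<Rightarrow> complex) \<Rightarrow> (smon \<Rightarrow> complex) \<Rightarrow> (smon \<Rightarrow> complex)" where
  "smult F G = (\<lambda>(\<gamma>, U). \<Sum>(u, v)\<in>ssupp F \<times> ssupp G.
      if (\<lambda>k. fst u k + fst v k) = \<gamma> \<and> snd u \<inter> snd v = {} \<and> snd u \<union> snd v = U
      then ssign (snd u) (snd v) * F u * G v else 0)"

definition smono :: "smon \<Rightarrow> (smon \<Rightarrow> complex)" where
  "smono u = (\<lambda>w. if w = u then 1 else 0)"

definition evar :: "nat \<Rightarrow> (smon \<Rightarrow> complex)" where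
  "evar i = smono ((\<lambda>k. if k = i then 1 else 0), {})"

definition ovar :: "nat \<Rightarrow> (smon \<Rightarrow> complex)" where
  "ovar j = smono ((\<lambda>k. 0), {j})"

text \<open>The element of S^1(V) = V with even coordinates ce and odd coordinates co.\<close>
definition svec :: "nat \<Rightarrow> nat \<Rightarrow> (nat \<Rightarrow> complex) \<Rightarrow> (nat \<Rightarrow> complex) \<Rightarrow> (smon \<Rightarrow> complex)" where
  "svec m n ce co = (\<lambda>w. (\<Sum>i<m. ce i * evar i w) + (\<Sum>j<n. co j * ovar j w))"

text \<open>Extension of a linear endomorphism of parity p of V (given by the images DE i of the
  even basis vectors and DO j of the odd basis vectors, as elements of S^1(V)) to a
  superderivation of S(V): D(uv) = D(u) v + (-1)^(p |u|) u D(v).\<close>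
definition sder_mon :: "nat \<Rightarrow> nat \<Rightarrow> (nat \<Rightarrow> smon \<Rightarrow> complex) \<Rightarrow> (nat \<Rightarrow> smon \<Rightarrow> complex)
    \<Rightarrow> smon \<Rightarrow> (smon \<Rightarrow> complex)" where
  "sder_mon m p DE DO u = (\<lambda>w.
      (\<Sum>i<m. of_nat (fst u i) *
          smult (smult (smono ((\<lambda>k. if k = i then fst u k - 1 else fst u k), {})) (DE i))
                (smono ((\<lambda>k. 0), snd u)) w)
    + (\<Sum>s\<in>snd u. (-1) ^ (p * card {t\<in>snd u. t < s}) *
          smult (smult (smono (fst u, {t\<in>snd u. t < s})) (DO s))
                (smono ((\<lambda>k. 0), {t\<in>snd u. s < t})) w))"

definition sder :: "nat \<Rightarrow> nat \<Rightarrow> (nat \<Rightarrow> smon \<Rightarrow> complex) \<Rightarrow> (nat \<Rightarrow> smon \<Rightarrow> complex)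
    \<Rightarrow> (smon \<Rightarrow> complex) \<Rightarrow> (smon \<Rightarrow> complex)" where
  "sder m p DE DO F = (\<lambda>w. \<Sum>u\<in>ssupp F. F u * sder_mon m p DE DO u w)"

text \<open>Projection S(V) = S(V_0) + V_1 S(V) \<rightarrow> S(V_0): keep the monomials without odd factors.\<close>
definition sproj :: "(smon \<Rightarrow> complex) \<Rightarrow> ((nat \<Rightarrow> nat) \<Rightarrow> complex)" where
  "sproj F = (\<lambda>\<alpha>. F (\<alpha>, {}))"

text \<open>An element of S(V_0) = C[x_0..x_{m-1}] as a polynomial function on V_0^*; a functional
  mu on V_0 is given by its values mu i on the basis vectors.\<close>
definition peval :: "nat \<Rightarrow> ((nat \<Rightarrow> nat) \<Rightarrow> complex) \<Rightarrow> (nat \<Rightarrow> complex) \<Rightarrow> complex" where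
  "peval m P \<mu> = (\<Sum>\<alpha>\<in>ssupp P. P \<alpha> * (\<Prod>i<m. \<mu> i ^ \<alpha> i))"

section \<open>The rank-one data attached to an isotropic lambda\<close>

definition k1lam :: "(complex \<Rightarrow> 'g::ab_group_add \<Rightarrow> 'g) \<Rightarrow> 'g set \<Rightarrow> 'g set \<Rightarrow> ('g \<Rightarrow> 'g \<Rightarrow> 'g)
     \<Rightarrow> ('g \<Rightarrow> 'g) \<Rightarrow> 'g set \<Rightarrow> ('g \<Rightarrow> complex) \<Rightarrow> 'g set" where
  "k1lam sc g0 g1 br \<theta> a lam =
     set_plus (wsp sc g0 g1 br a 1 lam) (wsp sc g0 g1 br a 1 (\<lambda>h. - lam h)) \<inter> kset \<theta>"

definition p1lam :: "(complex \<Rightarrow> 'g::ab_group_add \<Rightarrow> 'g) \<Rightarrow> 'g set \<Rightarrow> 'g set \<Rightarrow> ('g \<Rightarrow> 'g \<Rightarrow> 'g)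
     \<Rightarrow> ('g \<Rightarrow> 'g) \<Rightarrow> 'g set \<Rightarrow> ('g \<Rightarrow> complex) \<Rightarrow> 'g set" where
  "p1lam sc g0 g1 br \<theta> a lam =
     set_plus (wsp sc g0 g1 br a 1 lam) (wsp sc g0 g1 br a 1 (\<lambda>h. - lam h)) \<inter> pset \<theta>"

text \<open>Even part [k_1^lambda, k_1^lambda] of k_lambda (the odd part is k_1^lambda).\<close>
definition klam_even :: "(complex \<Rightarrow> 'g::ab_group_add \<Rightarrow> 'g) \<Rightarrow> ('g \<Rightarrow> 'g \<Rightarrow> 'g) \<Rightarrow> 'g set \<Rightarrow> 'g set" where
  "klam_even sc br K1 = module.span sc {br u v | u v. u \<in> K1 \<and> v \<in> K1}"

text \<open>Coordinates on p_lambda = a_lambda + p_1^lambda w.r.t. the ordered basis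
  e_0 = h0, e_1 = A_lambda (even) and f_0, ..., f_{n-1} (odd).\<close>
definition ebas :: "'g \<Rightarrow> 'g \<Rightarrow> nat \<Rightarrow> 'g" where
  "ebas h0 A i = (if i = 0 then h0 else A)"

definition pbasis :: "'g \<Rightarrow> 'g \<Rightarrow> (nat \<Rightarrow> 'g) \<Rightarrow> nat \<Rightarrow> 'g set" where
  "pbasis h0 A f n = {h0, A} \<union> f ` {..<n}"

definition pvec :: "(complex \<Rightarrow> 'g::ab_group_add \<Rightarrow> 'g) \<Rightarrow> 'g \<Rightarrow> 'g \<Rightarrow> (nat \<Rightarrow> 'g) \<Rightarrow> nat
     \<Rightarrow> 'g \<Rightarrow> (smon \<Rightarrow> complex)" where
  "pvec sc h0 A f n v = svec 2 n
      (\<lambda>i. module.representation sc (pbasis h0 A f n) v (ebas h0 A i))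
      (\<lambda>j. module.representation sc (pbasis h0 A f n) v (f j))"

text \<open>The action of x (of parity p) on S(p_lambda), extending ad x as a superderivation.\<close>
definition act :: "(complex \<Rightarrow> 'g::ab_group_add \<Rightarrow> 'g) \<Rightarrow> ('g \<Rightarrow> 'g \<Rightarrow> 'g) \<Rightarrow> 'g \<Rightarrow> 'g \<Rightarrow> (nat \<Rightarrow> 'g) \<Rightarrow> nat
     \<Rightarrow> nat \<Rightarrow> 'g \<Rightarrow> (smon \<Rightarrow> complex) \<Rightarrow> (smon \<Rightarrow> complex)" where
  "act sc br h0 A f n p x = sder 2 p
      (\<lambda>i. pvec sc h0 A f n (br x (ebas h0 A i)))
      (\<lambda>j. pvec sc h0 A f n (br x (f j)))"

definition inv_alg :: "(complex \<Rightarrow> 'g::ab_group_add \<Rightarrow> 'g) \<Rightarrow> ('g \<Rightarrow> 'g \<Rightarrow> 'g) \<Rightarrow> 'g set \<Rightarrow> 'g \<Rightarrow> 'g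
     \<Rightarrow> (nat \<Rightarrow> 'g) \<Rightarrow> nat \<Rightarrow> (smon \<Rightarrow> complex) set" where
  "inv_alg sc br K1 h0 A f n = {F \<in> spoly 2 n.
      (\<forall>x\<in>klam_even sc br K1. act sc br h0 A f n 0 x F = (\<lambda>w. 0))
    \<and> (\<forall>x\<in>K1. act sc br h0 A f n 1 x F = (\<lambda>w. 0))}"

text \<open>I_{lambda, m_lambda} as a subset of S(a_lambda) = C[h0, A_lambda].\<close>
definition Ilam :: "(complex \<Rightarrow> 'g::ab_group_add \<Rightarrow> 'g) \<Rightarrow> ('g \<Rightarrow> 'g \<Rightarrow> 'g) \<Rightarrow> 'g set \<Rightarrow> 'g \<Rightarrow> 'g
     \<Rightarrow> (nat \<Rightarrow> 'g) \<Rightarrow> nat \<Rightarrow> ((nat \<Rightarrow> nat) \<Rightarrow> complex) set" where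
  "Ilam sc br K1 h0 A f n = sproj ` inv_alg sc br K1 h0 A f n"

end

theory Submission
  imports Defs
begin

text \<open>
  In the coordinates of S(p_lambda) the variable x_0 belongs to h0 and x_1 to
  A_lambda.  Since lambda(A_lambda) = <lambda,lambda> = 0, the element A_lambda commutes with
  k_1^lambda and hence with all of k_lambda.  By invariance of b this gives
  b(A_lambda, [x, w]) = b([A_lambda, x], w) = 0 for x in k_lambda, and b(A_lambda, -) is
  exactly the h0-coordinate on p_lambda.  So every superderivation coming from k_lambda maps
  the generators of S(p_lambda) to elements free of x_0; such a derivation commutes with
  d/dx_0 and therefore with the translation x_0 |-> x_0 + z.  Consequently translation in x_0
  preserves the invariants S(p_lambda)^{k_lambda}, it commutes with the projection onto
  S(a_lambda), and on polynomial functions it is the shift by z lambda (since lambda(h0) = 1 and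
  lambda(A_lambda) = 0).
\<close>

lemma ssupp_smono [simp]: "ssupp (smono u) = {u}"
  by (auto simp: ssupp_def smono_def)

lemma smult_smono_left:
  "smult (smono (\<beta>, T)) G (\<gamma>, U) = (\<Sum>v\<in>ssupp G.
     if (\<lambda>k. \<beta> k + fst v k) = \<gamma> \<and> T \<inter> snd v = {} \<and> T \<union> snd v = U
     then ssign T (snd v) * G v else 0)"
proof -
  have e: "{(\<beta>, T)} \<times> ssupp G = Pair (\<beta>, T) ` ssupp G" by auto
  have inj: "inj_on (Pair (\<beta>, T)) (ssupp G)" by (simp add: inj_on_def)
  show ?thesis unfolding smult_def ssupp_smono e sum.reindex[OF inj]
    by (simp add: smono_def cong: if_cong)
qed

lemma smult_smono_right:
  assumes "finite (ssupp F)"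
  shows "smult F (smono ((\<lambda>k. 0), T2)) (\<gamma>, U) =
    (if T2 \<subseteq> U then ssign (U - T2) T2 * F (\<gamma>, U - T2) else 0)"
proof -
  have e: "ssupp F \<times> {((\<lambda>k. 0), T2)} = (\<lambda>u. (u, ((\<lambda>k::nat. 0::nat), T2))) ` ssupp F" by auto
  have "smult F (smono ((\<lambda>k. 0), T2)) (\<gamma>, U) = (\<Sum>u\<in>ssupp F.
      if fst u = \<gamma> \<and> snd u \<inter> T2 = {} \<and> snd u \<union> T2 = U then ssign (snd u) T2 * F u else 0)"
    unfolding smult_def ssupp_smono e
    by (simp add: sum.reindex inj_on_def smono_def cong: if_cong)
  also have "\<dots> = (\<Sum>u\<in>ssupp F. if u = (\<gamma>, U - T2)
      then (if T2 \<subseteq> U then ssign (U - T2) T2 * F (\<gamma>, U - T2) else 0) else 0)"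
    by (rule sum.cong) (auto simp: prod_eq_iff)
  also have "\<dots> = (if T2 \<subseteq> U then ssign (U - T2) T2 * F (\<gamma>, U - T2) else 0)"
    using assms by (simp only: sum.delta) (auto simp: ssupp_def)
  finally show ?thesis .
qed

lemma finite_ssupp_smult_smono:
  assumes "finite (ssupp G)"
  shows "finite (ssupp (smult (smono u) G))"
proof -
  obtain \<beta> T where u: "u = (\<beta>, T)" by fastforce
  have "ssupp (smult (smono u) G) \<subseteq> (\<lambda>v. ((\<lambda>k. \<beta> k + fst v k), T \<union> snd v)) ` ssupp G"
  proof
    fix w assume w: "w \<in> ssupp (smult (smono u) G)"
    obtain \<gamma> U where wd: "w = (\<gamma>, U)" by fastforce
    from w have "smult (smono (\<beta>, T)) G (\<gamma>, U) \<noteq> 0" by (simp add: ssupp_def u wd)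
    then have "\<exists>v\<in>ssupp G. (if (\<lambda>k. \<beta> k + fst v k) = \<gamma> \<and> T \<inter> snd v = {} \<and> T \<union> snd v = U
        then ssign T (snd v) * G v else 0) \<noteq> 0"
      unfolding smult_smono_left by (rule sum.not_neutral_contains_not_neutral) blast
    then obtain v where v: "v \<in> ssupp G" and c: "(\<lambda>k. \<beta> k + fst v k) = \<gamma>" "T \<union> snd v = U"
      by (metis (no_types, lifting))
    show "w \<in> (\<lambda>v. ((\<lambda>k. \<beta> k + fst v k), T \<union> snd v)) ` ssupp G"
      unfolding wd using c by (intro image_eqI[OF _ v]) simp
  qed
  then show ?thesis using assms finite_subset by blast
qed

lemma ssupp_lincomb: "ssupp (\<lambda>w. \<Sum>k\<in>K. c k * G k w) \<subseteq> (\<Union>k\<in>K. ssupp (G k))"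
proof
  fix w assume "w \<in> ssupp (\<lambda>w. \<Sum>k\<in>K. c k * G k w)"
  then have "(\<Sum>k\<in>K. c k * G k w) \<noteq> 0" by (simp add: ssupp_def)
  then obtain k where "k \<in> K" "c k * G k w \<noteq> 0"
    using sum.not_neutral_contains_not_neutral by blast
  then show "w \<in> (\<Union>k\<in>K. ssupp (G k))" by (auto simp: ssupp_def)
qed

section \<open>Elements free of the variable x_0\<close>

definition x0_free :: "(smon \<Rightarrow> complex) \<Rightarrow> bool" where
  "x0_free G \<longleftrightarrow> (\<forall>v\<in>ssupp G. fst v 0 = 0)"

text \<open>Multiplying an x_0-free element by x^beta xi_T only moves the x_0-exponent by beta_0,
  so the coefficients can be read off after removing x_0 on both sides.\<close>
lemma smult_smono_x0_free:
  assumes "x0_free G"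
  shows "smult (smono (\<beta>, T)) G (\<gamma>, U) =
    (if \<gamma> 0 = \<beta> 0 then smult (smono (\<beta>(0 := 0), T)) G (\<gamma>(0 := 0), U) else 0)"
proof -
  have key: "((\<lambda>k. \<beta> k + fst v k) = \<gamma>) \<longleftrightarrow>
      (\<gamma> 0 = \<beta> 0 \<and> (\<lambda>k. (\<beta>(0 := 0)) k + fst v k) = \<gamma>(0 := 0))"
    if "v \<in> ssupp G" for v
  proof -
    have v0: "fst v 0 = 0" using assms that by (auto simp: x0_free_def)
    show ?thesis
    proof
      assume eq: "(\<lambda>k. \<beta> k + fst v k) = \<gamma>"
      have "(\<lambda>k. (\<beta>(0 := 0)) k + fst v k) = \<gamma>(0 := 0)"
      proof
        fix k show "(\<beta>(0 := 0)) k + fst v k = (\<gamma>(0 := 0)) k"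
          using fun_cong[OF eq, of k] v0 by (cases "k = 0") simp_all
      qed
      then show "\<gamma> 0 = \<beta> 0 \<and> (\<lambda>k. (\<beta>(0 := 0)) k + fst v k) = \<gamma>(0 := 0)"
        using fun_cong[OF eq, of 0] v0 by simp
    next
      assume eq: "\<gamma> 0 = \<beta> 0 \<and> (\<lambda>k. (\<beta>(0 := 0)) k + fst v k) = \<gamma>(0 := 0)"
      show "(\<lambda>k. \<beta> k + fst v k) = \<gamma>"
      proof
        fix k show "\<beta> k + fst v k = \<gamma> k"
          using eq v0 fun_cong[OF conjunct2[OF eq], of k] by (cases "k = 0") auto
      qed
    qed
  qed
  show ?thesis
  proof (cases "\<gamma> 0 = \<beta> 0")
    case True
    then show ?thesis unfolding smult_smono_left
      by (simp, intro sum.cong refl) (simp add: key)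
  next
    case False
    then show ?thesis unfolding smult_smono_left
      by (simp, intro sum.neutral ballI) (simp add: key)
  qed
qed

lemma sandwich_x0_free:
  assumes "x0_free G" "finite (ssupp G)"
  shows "smult (smult (smono (\<beta>, T)) G) (smono ((\<lambda>k. 0), T2)) (\<gamma>, U) =
    (if \<gamma> 0 = \<beta> 0
     then smult (smult (smono (\<beta>(0 := 0), T)) G) (smono ((\<lambda>k. 0), T2)) (\<gamma>(0 := 0), U) else 0)"
proof -
  have fin: "finite (ssupp (smult (smono (\<beta>, T)) G))" "finite (ssupp (smult (smono (\<beta>(0 := 0), T)) G))"
    using assms(2) by (simp_all add: finite_ssupp_smult_smono)
  have "smult (smono (\<beta>, T)) G (\<gamma>, U - T2) = (if \<gamma> 0 = \<beta> 0
      then smult (smono (\<beta>(0 := 0), T)) G (\<gamma>(0 := 0), U - T2) else 0)"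
    by (rule smult_smono_x0_free[OF assms(1)])
  then show ?thesis
    unfolding smult_smono_right[OF fin(1)] smult_smono_right[OF fin(2)] by simp
qed

lemma svec_x0_free:
  assumes "ce 0 = 0"
  shows "x0_free (svec m n ce co)"
  unfolding x0_free_def
proof
  fix v assume v: "v \<in> ssupp (svec m n ce co)"
  show "fst v 0 = 0"
  proof (rule ccontr)
    assume nz: "fst v 0 \<noteq> 0"
    have "\<And>i. ce i * evar i v = 0"
      using nz assms by (auto simp: evar_def smono_def split: if_splits)
    moreover have "\<And>j. co j * ovar j v = 0"
      using nz by (auto simp: ovar_def smono_def)
    ultimately have "svec m n ce co v = 0"
      unfolding svec_def by (simp only: sum.neutral_const add_0)
    with v show False by (simp add: ssupp_def)
  qed
qed

lemma finite_ssupp_svec: "finite (ssupp (svec m n ce co))"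
proof -
  let ?E = "(\<lambda>i. ((\<lambda>k. if k = i then 1 else 0), {})) ` {..<m} \<union> (\<lambda>j. ((\<lambda>k. 0), {j})) ` {..<n}"
  have "ssupp (svec m n ce co) \<subseteq> ?E"
  proof
    fix v assume v: "v \<in> ssupp (svec m n ce co)"
    show "v \<in> ?E"
    proof (rule ccontr)
      assume nv: "v \<notin> ?E"
      have "\<And>i. i \<in> {..<m} \<Longrightarrow> ce i * evar i v = 0"
        using nv by (auto simp: evar_def smono_def)
      moreover have "\<And>j. j \<in> {..<n} \<Longrightarrow> co j * ovar j v = 0"
        using nv by (auto simp: ovar_def smono_def)
      ultimately have "svec m n ce co v = 0" unfolding svec_def
        by (metis (no_types, lifting) add_0 lessThan_iff sum.neutral)
      with v show False by (simp add: ssupp_def)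
    qed
  qed
  then show ?thesis by (rule finite_subset) simp
qed

text \<open>For S(V) with two even variables, the two parts of the superderivation D at the
  monomial x^alpha xi_S, read at x^gamma xi_U, after the x_0-exponents have been removed:
  the term from differentiating x_0 and the sum of all remaining terms.\<close>
definition sder_x0_term ::
    "(nat \<Rightarrow> smon \<Rightarrow> complex) \<Rightarrow> (nat \<Rightarrow> nat) \<Rightarrow> nat set \<Rightarrow> (nat \<Rightarrow> nat) \<Rightarrow> nat set \<Rightarrow> complex" where
  "sder_x0_term DE \<alpha> S \<gamma> U =
     smult (smult (smono (\<alpha>, {})) (DE 0)) (smono ((\<lambda>k. 0), S)) (\<gamma>, U)"

definition sder_other_terms :: "nat \<Rightarrow> (nat \<Rightarrow> smon \<Rightarrow> complex) \<Rightarrow> (nat \<Rightarrow> smon \<Rightarrow> complex)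
    \<Rightarrow> (nat \<Rightarrow> nat) \<Rightarrow> nat set \<Rightarrow> (nat \<Rightarrow> nat) \<Rightarrow> nat set \<Rightarrow> complex" where
  "sder_other_terms p DE DO \<alpha> S \<gamma> U =
     of_nat (\<alpha> 1) * smult (smult (smono (\<alpha>(1 := \<alpha> 1 - 1), {})) (DE 1)) (smono ((\<lambda>k. 0), S)) (\<gamma>, U)
   + (\<Sum>s\<in>S. (-1) ^ (p * card {t\<in>S. t < s}) *
        smult (smult (smono (\<alpha>, {t\<in>S. t < s})) (DO s)) (smono ((\<lambda>k. 0), {t\<in>S. s < t})) (\<gamma>, U))"

text \<open>If D maps the generators to x_0-free elements, the coefficient of x^gamma xi_U in
  D(x^alpha xi_S) depends on alpha_0 and gamma_0 only through the two patterns
  gamma_0 + 1 = alpha_0 (with factor alpha_0) and gamma_0 = alpha_0.  This is what makes D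
  commute with d/dx_0.\<close>
lemma sder_mon_x0_dependence:
  assumes hE: "\<And>i. x0_free (DE i) \<and> finite (ssupp (DE i))"
    and hO: "\<And>j. x0_free (DO j) \<and> finite (ssupp (DO j))"
  shows "sder_mon 2 p DE DO (\<alpha>, S) (\<gamma>, U) =
    of_nat (\<alpha> 0) * (if \<gamma> 0 + 1 = \<alpha> 0 then sder_x0_term DE (\<alpha>(0 := 0)) S (\<gamma>(0 := 0)) U else 0)
    + (if \<gamma> 0 = \<alpha> 0 then sder_other_terms p DE DO (\<alpha>(0 := 0)) S (\<gamma>(0 := 0)) U else 0)"
proof -
  have s2: "{..<2::nat} = {0, 1}" by auto
  have sum01: "\<And>f::nat \<Rightarrow> complex. (\<Sum>i\<in>{0, 1::nat}. f i) = f 0 + f 1" by simp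
  have e0: "(\<lambda>k. if k = 0 then \<alpha> k - 1 else \<alpha> k)(0 := 0) = \<alpha>(0 := 0)" by (rule ext) simp
  have e1: "(\<lambda>k. if k = 1 then \<alpha> k - 1 else \<alpha> k)(0 := 0) = (\<alpha>(0 := 0))(1 := (\<alpha>(0 := 0)) 1 - 1)"
    by (rule ext) simp
  have t0: "smult (smult (smono ((\<lambda>k. if k = 0 then \<alpha> k - 1 else \<alpha> k), {})) (DE 0)) (smono ((\<lambda>k. 0), S)) (\<gamma>, U)
     = (if \<gamma> 0 = \<alpha> 0 - 1 then sder_x0_term DE (\<alpha>(0 := 0)) S (\<gamma>(0 := 0)) U else 0)"
    by (subst sandwich_x0_free) (use hE in \<open>simp_all only: e0 sder_x0_term_def\<close>, simp)
  have t1: "smult (smult (smono ((\<lambda>k. if k = 1 then \<alpha> k - 1 else \<alpha> k), {})) (DE 1)) (smono ((\<lambda>k. 0), S)) (\<gamma>, U)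
     = (if \<gamma> 0 = \<alpha> 0 then smult (smult (smono ((\<alpha>(0 := 0))(1 := (\<alpha>(0 := 0)) 1 - 1), {})) (DE (1::nat)))
          (smono ((\<lambda>k. 0), S)) (\<gamma>(0 := 0), U) else 0)"
    by (subst sandwich_x0_free) (use hE in \<open>simp_all only: e1\<close>, simp)
  have ts: "\<And>s. smult (smult (smono (\<alpha>, {t\<in>S. t < s})) (DO s)) (smono ((\<lambda>k. 0), {t\<in>S. s < t})) (\<gamma>, U)
     = (if \<gamma> 0 = \<alpha> 0 then smult (smult (smono (\<alpha>(0 := 0), {t\<in>S. t < s})) (DO s))
          (smono ((\<lambda>k. 0), {t\<in>S. s < t})) (\<gamma>(0 := 0), U) else 0)"
    using hO by (intro sandwich_x0_free) auto
  have expanded: "sder_mon 2 p DE DO (\<alpha>, S) (\<gamma>, U) =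
      of_nat (\<alpha> 0) * (if \<gamma> 0 = \<alpha> 0 - 1 then sder_x0_term DE (\<alpha>(0 := 0)) S (\<gamma>(0 := 0)) U else 0)
    + of_nat (\<alpha> 1) * (if \<gamma> 0 = \<alpha> 0 then smult (smult (smono ((\<alpha>(0 := 0))(1 := (\<alpha>(0 := 0)) 1 - 1), {}))
          (DE (1::nat))) (smono ((\<lambda>k. 0), S)) (\<gamma>(0 := 0), U) else 0)
    + (\<Sum>s\<in>S. (-1) ^ (p * card {t\<in>S. t < s}) * (if \<gamma> 0 = \<alpha> 0 then smult (smult (smono (\<alpha>(0 := 0),
          {t\<in>S. t < s})) (DO s)) (smono ((\<lambda>k. 0), {t\<in>S. s < t})) (\<gamma>(0 := 0), U) else 0))"
    unfolding sder_mon_def s2 fst_conv snd_conv sum01 t0 t1 ts by (rule refl)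
  show ?thesis
    unfolding expanded sder_other_terms_def
    by (cases "\<gamma> 0 = \<alpha> 0"; cases "\<alpha> 0") (auto simp: sum.neutral)
qed

lemma sder_superset:
  assumes "finite B" "ssupp F \<subseteq> B"
  shows "sder m p DE DO F w = (\<Sum>u\<in>B. F u * sder_mon m p DE DO u w)"
  unfolding sder_def using assms by (intro sum.mono_neutral_left) (auto simp: ssupp_def)

lemma sder_lincomb:
  assumes "finite K" "\<And>k. k \<in> K \<Longrightarrow> finite (ssupp (G k))"
  shows "sder m p DE DO (\<lambda>w. \<Sum>k\<in>K. c k * G k w) w = (\<Sum>k\<in>K. c k * sder m p DE DO (G k) w)"
proof -
  let ?B = "\<Union>k\<in>K. ssupp (G k)"
  have fB: "finite ?B" using assms by auto
  have "sder m p DE DO (\<lambda>w. \<Sum>k\<in>K. c k * G k w) w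
      = (\<Sum>u\<in>?B. (\<Sum>k\<in>K. c k * G k u) * sder_mon m p DE DO u w)"
    by (rule sder_superset[OF fB ssupp_lincomb])
  also have "\<dots> = (\<Sum>k\<in>K. \<Sum>u\<in>?B. c k * (G k u * sder_mon m p DE DO u w))"
    by (simp add: sum_distrib_right mult.assoc) (rule sum.swap)
  also have "\<dots> = (\<Sum>k\<in>K. c k * sder m p DE DO (G k) w)"
  proof (rule sum.cong[OF refl])
    fix k assume k: "k \<in> K"
    have "sder m p DE DO (G k) w = (\<Sum>u\<in>?B. G k u * sder_mon m p DE DO u w)"
      by (rule sder_superset[OF fB]) (use k in auto)
    then show "(\<Sum>u\<in>?B. c k * (G k u * sder_mon m p DE DO u w)) = c k * sder m p DE DO (G k) w"
      by (simp add: sum_distrib_left)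
  qed
  finally show ?thesis .
qed

lemma sder_smono: "sder m p DE DO (smono u) w = sder_mon m p DE DO u w"
  unfolding sder_def ssupp_smono by (simp add: smono_def)

section \<open>Translation in the variable x_0\<close>

text \<open>The image of x^alpha xi_S under x_0 \<mapsto> x_0 + z, expanded by the binomial theorem,
  and the induced translation of an arbitrary element of S(V).\<close>
definition shift_mon :: "complex \<Rightarrow> smon \<Rightarrow> smon \<Rightarrow> complex" where
  "shift_mon z u = (\<lambda>w. \<Sum>k\<in>{..fst u 0}.
     (of_nat (fst u 0 choose k) * z ^ (fst u 0 - k)) * smono ((fst u)(0 := k), snd u) w)"

definition x0_shift :: "complex \<Rightarrow> (smon \<Rightarrow> complex) \<Rightarrow> smon \<Rightarrow> complex" where
  "x0_shift z F = (\<lambda>w. \<Sum>u\<in>ssupp F. F u * shift_mon z u w)"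

text \<open>The coefficient formula of the translation: the coefficient at x^gamma xi_U collects the
  coefficients of F at gamma with gamma_0 raised by j, weighted by binom(gamma_0 + j, j) z^j;
  here j is truncated below N.\<close>
definition shift_coeff :: "nat \<Rightarrow> complex \<Rightarrow> (smon \<Rightarrow> complex) \<Rightarrow> smon \<Rightarrow> complex" where
  "shift_coeff N z F w =
     (\<Sum>j<N. of_nat (fst w 0 + j choose j) * z ^ j * F ((fst w)(0 := fst w 0 + j), snd w))"

lemma ssupp_shift_mon:
  "ssupp (shift_mon z u) \<subseteq> (\<Union>k\<in>{..fst u 0}. {((fst u)(0 := k), snd u)})"
proof -
  have "ssupp (shift_mon z u) \<subseteq> (\<Union>k\<in>{..fst u 0}. ssupp (smono ((fst u)(0 := k), snd u)))"
    unfolding shift_mon_def by (rule ssupp_lincomb)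
  then show ?thesis by simp
qed

lemma finite_ssupp_shift_mon: "finite (ssupp (shift_mon z u))"
  using ssupp_shift_mon by (rule finite_subset) simp

lemma sder_shift_mon:
  "sder m p DE DO (shift_mon z u) w = (\<Sum>k\<in>{..fst u 0}.
     (of_nat (fst u 0 choose k) * z ^ (fst u 0 - k)) * sder_mon m p DE DO ((fst u)(0 := k), snd u) w)"
  unfolding shift_mon_def by (subst sder_lincomb) (simp_all add: sder_smono)

lemma shift_coeff_lincomb:
  "shift_coeff N z (\<lambda>w. \<Sum>k\<in>K. c k * G k w) w = (\<Sum>k\<in>K. c k * shift_coeff N z (G k) w)"
  unfolding shift_coeff_def by (simp add: sum_distrib_left mult_ac) (rule sum.swap)

text \<open>The two sides of the commutation of D with the translation, evaluated on the pattern
  of lemma sder_mon_x0_dependence (a = alpha_0, c = gamma_0).\<close>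
lemma binomial_sum_pattern:
  fixes z R0 R1 :: complex
  shows "(\<Sum>k\<le>a. (of_nat (a choose k) * z ^ (a - k)) *
      (of_nat k * (if c + 1 = k then R0 else 0) + (if c = k then R1 else 0)))
    = (if c + 1 \<le> a then of_nat (a choose (c + 1)) * z ^ (a - (c + 1)) * (of_nat (c + 1) * R0) else 0)
    + (if c \<le> a then of_nat (a choose c) * z ^ (a - c) * R1 else 0)"
  by (simp add: distrib_left sum.distrib if_distrib[of "\<lambda>x. _ * x"] sum.delta'
      eq_commute[of "c + 1"] eq_commute[of c] cong: if_cong)

lemma shift_coeff_sum_pattern:
  fixes z R0 R1 :: complex
  assumes "a < N"
  shows "(\<Sum>j<N. of_nat (c + j choose j) * z ^ j *
      (of_nat a * (if c + j + 1 = a then R0 else 0) + (if c + j = a then R1 else 0)))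
    = (if c + 1 \<le> a then of_nat (a - 1 choose (a - (c + 1))) * z ^ (a - (c + 1)) * (of_nat a * R0) else 0)
    + (if c \<le> a then of_nat (a choose (a - c)) * z ^ (a - c) * R1 else 0)"
proof -
  have e1: "(Suc (c + j) = a) \<longleftrightarrow> (Suc c \<le> a \<and> j = a - Suc c)" for j by auto
  have e2: "(c + j = a) \<longleftrightarrow> (c \<le> a \<and> j = a - c)" for j by auto
  show ?thesis using assms
    by (simp add: distrib_left sum.distrib e1 e2 if_distrib[of "\<lambda>x. _ * x"] sum.delta' cong: if_cong)
      (auto simp: Suc_diff_Suc less_imp_diff_less)
qed

lemma binomial_absorption_symmetric:
  fixes a c :: nat
  assumes "c + 1 \<le> a"
  shows "(a choose (c + 1)) * (c + 1) = (a - 1 choose (a - (c + 1))) * a"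
proof -
  have "Suc (a - 1) * (a - 1 choose c) = (Suc (a - 1) choose Suc c) * Suc c"
    by (rule Suc_times_binomial_eq)
  moreover have "(a - 1 choose c) = (a - 1 choose (a - 1 - c))"
    using assms by (intro binomial_symmetric) simp
  ultimately show ?thesis using assms by (simp add: mult.commute)
qed

lemma sder_shift_mon_commute:
  assumes hE: "\<And>i. x0_free (DE i) \<and> finite (ssupp (DE i))"
    and hO: "\<And>j. x0_free (DO j) \<and> finite (ssupp (DO j))"
    and N: "fst u 0 < N"
  shows "sder 2 p DE DO (shift_mon z u) w = shift_coeff N z (sder_mon 2 p DE DO u) w"
proof -
  obtain \<alpha> S where u: "u = (\<alpha>, S)" by fastforce
  obtain \<gamma> U where w: "w = (\<gamma>, U)" by fastforce
  define a where "a = \<alpha> 0"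
  define c where "c = \<gamma> 0"
  define R0 where "R0 = sder_x0_term DE (\<alpha>(0 := 0)) S (\<gamma>(0 := 0)) U"
  define R1 where "R1 = sder_other_terms p DE DO (\<alpha>(0 := 0)) S (\<gamma>(0 := 0)) U"
  have aN: "a < N" using N by (simp add: u a_def)
  have lhs_mon: "\<And>k. sder_mon 2 p DE DO (\<alpha>(0 := k), S) (\<gamma>, U)
      = of_nat k * (if c + 1 = k then R0 else 0) + (if c = k then R1 else 0)"
    by (subst sder_mon_x0_dependence[OF hE hO]) (simp add: c_def R0_def R1_def)
  have rhs_mon: "\<And>j. sder_mon 2 p DE DO (\<alpha>, S) (\<gamma>(0 := c + j), U)
      = of_nat a * (if c + j + 1 = a then R0 else 0) + (if c + j = a then R1 else 0)"
    by (subst sder_mon_x0_dependence[OF hE hO]) (simp add: a_def c_def R0_def R1_def)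
  have "sder 2 p DE DO (shift_mon z u) w
      = (if c + 1 \<le> a then of_nat (a choose (c + 1)) * z ^ (a - (c + 1)) * (of_nat (c + 1) * R0) else 0)
      + (if c \<le> a then of_nat (a choose c) * z ^ (a - c) * R1 else 0)"
    unfolding sder_shift_mon u w fst_conv snd_conv a_def[symmetric] lhs_mon
    by (rule binomial_sum_pattern)
  moreover have "shift_coeff N z (sder_mon 2 p DE DO u) w
      = (if c + 1 \<le> a then of_nat (a - 1 choose (a - (c + 1))) * z ^ (a - (c + 1)) * (of_nat a * R0) else 0)
      + (if c \<le> a then of_nat (a choose (a - c)) * z ^ (a - c) * R1 else 0)"
    unfolding shift_coeff_def u w fst_conv snd_conv c_def[symmetric] rhs_mon
    by (rule shift_coeff_sum_pattern[OF aN])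
  moreover have "of_nat (a choose (c + 1)) * z ^ (a - (c + 1)) * (of_nat (c + 1) * R0)
      = of_nat (a - 1 choose (a - (c + 1))) * z ^ (a - (c + 1)) * (of_nat a * R0)" if "c + 1 \<le> a"
  proof -
    have "(of_nat (a choose (c + 1)) * of_nat (c + 1) :: complex)
        = of_nat (a - 1 choose (a - (c + 1))) * of_nat a"
      using binomial_absorption_symmetric[OF that] by (metis of_nat_mult)
    then show ?thesis by (simp add: mult_ac)
  qed
  moreover have "c \<le> a \<Longrightarrow> (a choose (a - c)) = (a choose c)"
    by (simp add: binomial_symmetric[symmetric])
  ultimately show ?thesis by auto
qed

lemma x0_degree_bound:
  fixes F :: "smon \<Rightarrow> complex"
  assumes "finite (ssupp F)"
  shows "\<exists>N. \<forall>u\<in>ssupp F. fst u 0 < N"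
proof
  show "\<forall>u\<in>ssupp F. fst u 0 < Suc (Max ((\<lambda>u. fst u 0) ` ssupp F))"
    using assms by (auto simp: less_Suc_eq_le intro!: Max_ge)
qed

lemma sder_x0_shift:
  assumes hE: "\<And>i. x0_free (DE i) \<and> finite (ssupp (DE i))"
    and hO: "\<And>j. x0_free (DO j) \<and> finite (ssupp (DO j))"
    and fF: "finite (ssupp F)" and kernel: "sder 2 p DE DO F = (\<lambda>w. 0)"
  shows "sder 2 p DE DO (x0_shift z F) = (\<lambda>w. 0)"
proof
  fix w
  obtain N where N: "\<forall>u\<in>ssupp F. fst u 0 < N" using x0_degree_bound[OF fF] by blast
  have "sder 2 p DE DO (x0_shift z F) w = (\<Sum>u\<in>ssupp F. F u * sder 2 p DE DO (shift_mon z u) w)"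
    unfolding x0_shift_def by (rule sder_lincomb[OF fF finite_ssupp_shift_mon])
  also have "\<dots> = (\<Sum>u\<in>ssupp F. F u * shift_coeff N z (sder_mon 2 p DE DO u) w)"
    using N by (intro sum.cong refl) (simp add: sder_shift_mon_commute[OF hE hO])
  also have "\<dots> = shift_coeff N z (sder 2 p DE DO F) w"
    unfolding sder_def by (rule shift_coeff_lincomb[symmetric])
  also have "\<dots> = 0" by (simp add: kernel shift_coeff_def)
  finally show "sder 2 p DE DO (x0_shift z F) w = 0" .
qed

lemma x0_shift_spoly:
  assumes "F \<in> spoly 2 n"
  shows "x0_shift z F \<in> spoly 2 n"
proof -
  have fF: "finite (ssupp F)" using assms by (simp add: spoly_def)
  have sub: "ssupp (x0_shift z F) \<subseteq> (\<Union>u\<in>ssupp F. ssupp (shift_mon z u))"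
    unfolding x0_shift_def by (rule ssupp_lincomb)
  have "(\<forall>i\<ge>2. fst w i = 0) \<and> snd w \<subseteq> {..<n}" if w: "w \<in> ssupp (x0_shift z F)" for w
  proof -
    obtain u k where u: "u \<in> ssupp F" and "w = ((fst u)(0 := k), snd u)"
      using sub w ssupp_shift_mon by blast
    moreover have "(\<forall>i\<ge>2. fst u i = 0) \<and> snd u \<subseteq> {..<n}" using assms u by (simp add: spoly_def)
    ultimately show ?thesis by simp
  qed
  moreover have "finite (ssupp (x0_shift z F))"
    by (rule finite_subset[OF sub]) (simp add: fF finite_ssupp_shift_mon)
  ultimately show ?thesis unfolding spoly_def by blast
qed

lemma peval_superset:
  assumes "finite B" "ssupp P \<subseteq> B"
  shows "peval m P \<mu> = (\<Sum>\<beta>\<in>B. P \<beta> * (\<Prod>i<m. \<mu> i ^ \<beta> i))"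
  unfolding peval_def using assms by (intro sum.mono_neutral_left) (auto simp: ssupp_def)

lemma ssupp_sproj: "ssupp (sproj G) \<subseteq> fst ` ssupp G"
  by (auto simp: ssupp_def sproj_def intro: image_eqI[of _ _ "(_, {})"])

lemma peval_sproj_lincomb:
  assumes "finite K" "\<And>k. k \<in> K \<Longrightarrow> finite (ssupp (G k))"
  shows "peval m (sproj (\<lambda>w. \<Sum>k\<in>K. c k * G k w)) \<mu> = (\<Sum>k\<in>K. c k * peval m (sproj (G k)) \<mu>)"
proof -
  let ?B = "\<Union>k\<in>K. fst ` ssupp (G k)"
  have fB: "finite ?B" using assms by auto
  have sub: "ssupp (sproj (\<lambda>w. \<Sum>k\<in>K. c k * G k w)) \<subseteq> ?B"
    using ssupp_sproj ssupp_lincomb by fastforce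
  have subk: "ssupp (sproj (G k)) \<subseteq> ?B" if "k \<in> K" for k
    using ssupp_sproj that by fastforce
  have "peval m (sproj (\<lambda>w. \<Sum>k\<in>K. c k * G k w)) \<mu>
      = (\<Sum>\<beta>\<in>?B. (\<Sum>k\<in>K. c k * G k (\<beta>, {})) * (\<Prod>i<m. \<mu> i ^ \<beta> i))"
    by (subst peval_superset[OF fB sub]) (simp add: sproj_def)
  also have "\<dots> = (\<Sum>k\<in>K. c k * (\<Sum>\<beta>\<in>?B. G k (\<beta>, {}) * (\<Prod>i<m. \<mu> i ^ \<beta> i)))"
    by (simp add: sum_distrib_right sum_distrib_left mult.assoc) (rule sum.swap)
  also have "\<dots> = (\<Sum>k\<in>K. c k * peval m (sproj (G k)) \<mu>)"
  proof (rule sum.cong[OF refl])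
    fix k assume "k \<in> K"
    then show "c k * (\<Sum>\<beta>\<in>?B. G k (\<beta>, {}) * (\<Prod>i<m. \<mu> i ^ \<beta> i)) = c k * peval m (sproj (G k)) \<mu>"
      by (subst peval_superset[OF fB subk]) (simp_all add: sproj_def)
  qed
  finally show ?thesis .
qed

lemma peval_sproj_smono:
  "peval m (sproj (smono (\<alpha>, S))) \<mu> = (if S = {} then (\<Prod>i<m. \<mu> i ^ \<alpha> i) else 0)"
  by (simp add: peval_superset[of "{\<alpha>}"] ssupp_def sproj_def smono_def)

lemma lincomb_smono:
  assumes "finite (ssupp F)"
  shows "(\<lambda>w. \<Sum>u\<in>ssupp F. F u * smono u w) = F"
proof
  fix w
  have "(\<Sum>u\<in>ssupp F. F u * smono u w) = (\<Sum>u\<in>ssupp F. if u = w then F w else 0)"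
    by (intro sum.cong refl) (simp add: smono_def)
  also have "\<dots> = F w" using assms by (simp add: ssupp_def)
  finally show "(\<Sum>u\<in>ssupp F. F u * smono u w) = F w" .
qed

lemma prod_lessThan_2: "(\<Prod>i<2. (g :: nat \<Rightarrow> complex) i) = g 0 * g 1"
  by (simp add: numeral_2_eq_2)

lemma peval_sproj_shift_mon:
  "peval 2 (sproj (shift_mon z u)) \<mu> = peval 2 (sproj (smono u)) (\<mu>(0 := \<mu> 0 + z))"
proof -
  obtain \<alpha> S where u: "u = (\<alpha>, S)" by fastforce
  have "peval 2 (sproj (shift_mon z u)) \<mu>
      = (\<Sum>k\<le>\<alpha> 0. of_nat (\<alpha> 0 choose k) * z ^ (\<alpha> 0 - k) * peval 2 (sproj (smono (\<alpha>(0 := k), S))) \<mu>)"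
    unfolding shift_mon_def u fst_conv snd_conv by (rule peval_sproj_lincomb) simp_all
  also have "\<dots> = (if S = {} then (\<Sum>k\<le>\<alpha> 0. of_nat (\<alpha> 0 choose k) * \<mu> 0 ^ k * z ^ (\<alpha> 0 - k)) * \<mu> 1 ^ \<alpha> 1 else 0)"
    by (cases "S = {}")
      (simp_all add: peval_sproj_smono prod_lessThan_2 sum_distrib_right sum_distrib_left mult_ac)
  also have "\<dots> = peval 2 (sproj (smono u)) (\<mu>(0 := \<mu> 0 + z))"
    by (simp add: u peval_sproj_smono prod_lessThan_2 binomial_ring)
  finally show ?thesis .
qed

lemma peval_sproj_x0_shift:
  assumes "finite (ssupp F)"
  shows "peval 2 (sproj (x0_shift z F)) \<mu> = peval 2 (sproj F) (\<mu>(0 := \<mu> 0 + z))"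
proof -
  have "peval 2 (sproj (x0_shift z F)) \<mu> = (\<Sum>u\<in>ssupp F. F u * peval 2 (sproj (shift_mon z u)) \<mu>)"
    unfolding x0_shift_def by (rule peval_sproj_lincomb[OF assms finite_ssupp_shift_mon])
  also have "\<dots> = (\<Sum>u\<in>ssupp F. F u * peval 2 (sproj (smono u)) (\<mu>(0 := \<mu> 0 + z)))"
    by (simp add: peval_sproj_shift_mon)
  also have "\<dots> = peval 2 (sproj (\<lambda>w. \<Sum>u\<in>ssupp F. F u * smono u w)) (\<mu>(0 := \<mu> 0 + z))"
    by (rule peval_sproj_lincomb[symmetric, OF assms]) simp
  finally show ?thesis by (simp only: lincomb_smono[OF assms])
qed

section \<open>The invariants are stable under translation in x_0\<close>

lemma act_x0_shift:
  assumes "\<And>w. x0_free (pvec sc h0 A f n (br x w))"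
    and "finite (ssupp F)" and "act sc br h0 A f n p x F = (\<lambda>w. 0)"
  shows "act sc br h0 A f n p x (x0_shift z F) = (\<lambda>w. 0)"
  using assms unfolding act_def
  by (intro sder_x0_shift) (simp_all add: pvec_def finite_ssupp_svec)

lemma inv_alg_x0_shift:
  assumes gen: "\<And>x w. x \<in> klam_even sc br K1 \<union> K1 \<Longrightarrow> x0_free (pvec sc h0 A f n (br x w))"
    and F: "F \<in> inv_alg sc br K1 h0 A f n"
  shows "x0_shift z F \<in> inv_alg sc br K1 h0 A f n"
proof -
  have Fs: "F \<in> spoly 2 n" using F by (simp add: inv_alg_def)
  then have fF: "finite (ssupp F)" by (simp add: spoly_def)
  show ?thesis
    unfolding inv_alg_def
  proof (intro CollectI conjI ballI)
    show "x0_shift z F \<in> spoly 2 n" by (rule x0_shift_spoly[OF Fs])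
  next
    fix x assume "x \<in> klam_even sc br K1"
    then show "act sc br h0 A f n 0 x (x0_shift z F) = (\<lambda>w. 0)"
      using F gen by (intro act_x0_shift[OF _ fF]) (simp_all add: inv_alg_def)
  next
    fix x assume "x \<in> K1"
    then show "act sc br h0 A f n 1 x (x0_shift z F) = (\<lambda>w. 0)"
      using F gen by (intro act_x0_shift[OF _ fF]) (simp_all add: inv_alg_def)
  qed
qed

section \<open>The structure of the rank-one superpair\<close>

lemma lie_superalgebra_facts:
  assumes "lie_superalgebra sc g0 g1 br"
  shows "module sc" and "module.subspace sc g1"
    and "\<And>x. module_hom sc sc (br x)" and "\<And>y. module_hom sc sc (\<lambda>x. br x y)"
    and "\<And>x y z. x \<in> g0 \<Longrightarrow> y \<in> g1 \<Longrightarrow> br x (br y z) = br (br x y) z + br y (br x z)"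
proof -
  have VS: "vector_space sc" using assms by (simp add: lie_superalgebra_def super_vs_def)
  then show M: "module sc" by (simp add: module_iff_vector_space)
  show "module.subspace sc g1" using assms by (simp add: lie_superalgebra_def super_vs_def)
  show "\<And>x. module_hom sc sc (br x)" "\<And>y. module_hom sc sc (\<lambda>x. br x y)"
    using assms by (simp_all add: lie_superalgebra_def module_hom_iff_linear)
  fix x y z assume "x \<in> g0" "y \<in> g1"
  then have "x \<in> grd g0 g1 0" "y \<in> grd g0 g1 1" by (simp_all add: grd_def)
  then have "br x (br y z) = br (br x y) z + sc ((-1) ^ (0 * 1)) (br y (br x z))"
    using assms unfolding lie_superalgebra_def by blast
  then show "br x (br y z) = br (br x y) z + br y (br x z)"
    by (simp add: module.scale_one[OF M])
qed

lemma superpair_facts: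
  assumes "strongly_reductive_superpair sc g0 g1 br \<theta> b"
  shows "lie_superalgebra sc g0 g1 br"
    and "\<And>x. module_hom sc (*) (b x)" and "\<And>y. module_hom sc (*) (\<lambda>x. b x y)"
    and "\<And>x y. x \<in> g0 \<Longrightarrow> y \<in> g1 \<Longrightarrow> b x y = 0"
    and "\<And>x y z. b (br x y) z = b x (br y z)"
  using assms unfolding strongly_reductive_superpair_def module_hom_iff_linear by blast+

lemma weight_pair_centralized:
  assumes LS: "lie_superalgebra sc g0 g1 br" and "A \<in> a" "lam A = 0"
    and x: "x \<in> set_plus (wsp sc g0 g1 br a 1 lam) (wsp sc g0 g1 br a 1 (\<lambda>h. - lam h))"
  shows "x \<in> g1 \<and> br A x = 0"
proof -
  note M = lie_superalgebra_facts(1)[OF LS] and brlin = lie_superalgebra_facts(3)[OF LS]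
  obtain u1 u2 where x12: "x = u1 + u2" and u1: "u1 \<in> wsp sc g0 g1 br a 1 lam"
    and u2: "u2 \<in> wsp sc g0 g1 br a 1 (\<lambda>h. - lam h)"
    using x by (auto simp: set_plus_def)
  have g: "u1 \<in> g1" "u2 \<in> g1" using u1 u2 by (auto simp: wsp_def grd_def)
  have "br A u1 = sc (lam A) u1" "br A u2 = sc (- lam A) u2" using u1 u2 assms(2) by (auto simp: wsp_def)
  then have "br A u1 = 0" "br A u2 = 0" using assms(3) module.scale_zero_left[OF M] by simp_all
  then show ?thesis
    using module.subspace_add[OF M lie_superalgebra_facts(2)[OF LS] g] module_hom.add[OF brlin, of A u1 u2] x12
    by simp
qed

text \<open>By the Jacobi identity an even element centralizing K1 also centralizes [K1, K1].\<close>
lemma klam_even_centralized: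
  assumes LS: "lie_superalgebra sc g0 g1 br" and A: "A \<in> g0"
    and K1: "\<And>u. u \<in> K1 \<Longrightarrow> u \<in> g1 \<and> br A u = 0"
    and x: "x \<in> klam_even sc br K1"
  shows "br A x = 0"
proof -
  note brlin = lie_superalgebra_facts(3)[OF LS] and brlin2 = lie_superalgebra_facts(4)[OF LS]
  have "br A y = 0" if y: "y \<in> {br u v | u v. u \<in> K1 \<and> v \<in> K1}" for y
  proof -
    obtain u v where y: "y = br u v" and u: "u \<in> K1" and v: "v \<in> K1" using y by blast
    have "br A (br u v) = br (br A u) v + br u (br A v)"
      using lie_superalgebra_facts(5)[OF LS A] K1[OF u] by blast
    then show ?thesis
      using K1[OF u] K1[OF v] module_hom.zero[OF brlin2] module_hom.zero[OF brlin] y by simp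
  qed
  then show ?thesis
    using module_hom.eq_0_on_span[OF brlin, of "{br u v | u v. u \<in> K1 \<and> v \<in> K1}" A x] x
    by (simp add: klam_even_def)
qed

lemma pvec_x0_free:
  assumes M: "module sc" and blin: "module_hom sc (*) (b A)"
    and dual: "\<And>v. v \<in> pbasis h0 A f n \<Longrightarrow> b A v = (if v = h0 then 1 else 0)"
    and w: "b A w = 0"
  shows "x0_free (pvec sc h0 A f n w)"
proof -
  let ?B = "pbasis h0 A f n"
  have fB: "finite ?B" and h0B: "h0 \<in> ?B" by (simp_all add: pbasis_def)
  have "module.representation sc ?B w h0 = 0"
  proof (cases "module.independent sc ?B \<and> w \<in> module.span sc ?B")
    case True
    have "b A w = b A (\<Sum>v\<in>?B. sc (module.representation sc ?B w v) v)"
      using True fB by (simp add: module.sum_representation_eq[OF M])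
    also have "\<dots> = (\<Sum>v\<in>?B. module.representation sc ?B w v * b A v)"
      by (simp add: module_hom.sum[OF blin] module_hom.scale[OF blin])
    also have "\<dots> = (\<Sum>v\<in>?B. if v = h0 then module.representation sc ?B w v else 0)"
      by (intro sum.cong refl) (simp add: dual)
    also have "\<dots> = module.representation sc ?B w h0"
      using fB h0B by simp
    finally show ?thesis using w by simp
  next
    case False
    show ?thesis by (subst module.representation_def[OF M]) (simp only: False if_False)
  qed
  then show ?thesis unfolding pvec_def by (intro svec_x0_free) (simp add: ebas_def)
qed

text \<open>The key consequence of isotropy: since lambda(A_lambda) = <lambda, lambda> = 0,
  A_lambda centralizes k_lambda, so by invariance b(A_lambda, [x, w]) = 0 for x in k_lambda;
  as b(A_lambda, -) is the h0-coordinate on p_lambda, the brackets [x, w] are x_0-free.\<close>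
lemma klam_brackets_x0_free:
  assumes SR: "strongly_reductive_superpair sc g0 g1 br \<theta> b"
    and cartan: "even_cartan_even_type sc g0 g1 br \<theta> a"
    and A: "A \<in> a" "\<forall>h\<in>a. b A h = lam h" "b A A = 0"
    and h0: "h0 \<in> a" "lam h0 = 1"
    and f: "module.span sc (f ` {..<n}) = p1lam sc g0 g1 br \<theta> a lam"
    and x: "x \<in> klam_even sc br (k1lam sc g0 g1 br \<theta> a lam) \<union> k1lam sc g0 g1 br \<theta> a lam"
  shows "x0_free (pvec sc h0 A f n (br x w))"
proof -
  note LS = superpair_facts(1)[OF SR]
  note M = lie_superalgebra_facts(1)[OF LS]
  have Ag0: "A \<in> g0" using cartan A(1) by (auto simp: even_cartan_even_type_def)
  have lamA: "lam A = 0" using A(2)[rule_format, OF A(1)] A(3) by simp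
  have centr: "u \<in> g1 \<and> br A u = 0"
    if "u \<in> set_plus (wsp sc g0 g1 br a 1 lam) (wsp sc g0 g1 br a 1 (\<lambda>h. - lam h))" for u
    using weight_pair_centralized[OF LS A(1) lamA that] .
  have K1: "\<And>u. u \<in> k1lam sc g0 g1 br \<theta> a lam \<Longrightarrow> u \<in> g1 \<and> br A u = 0"
    using centr by (auto simp: k1lam_def)
  have brAx: "br A x = 0"
  proof (cases "x \<in> k1lam sc g0 g1 br \<theta> a lam")
    case True
    then show ?thesis using K1 by blast
  next
    case False
    then show ?thesis using x by (intro klam_even_centralized[OF LS Ag0 K1]) simp_all
  qed
  have "b A (br x w) = b (br A x) w" by (rule superpair_facts(5)[OF SR, symmetric])
  also have "\<dots> = 0" using brAx module_hom.zero[OF superpair_facts(3)[OF SR, of w]] by simp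
  finally have bw: "b A (br x w) = 0" .
  have fg1: "f j \<in> g1" if "j < n" for j
  proof -
    have "f j \<in> module.span sc (f ` {..<n})" by (rule module.span_base[OF M]) (use that in blast)
    then have "f j \<in> p1lam sc g0 g1 br \<theta> a lam" using f by simp
    then show ?thesis using centr by (auto simp: p1lam_def)
  qed
  have dual: "b A v = (if v = h0 then 1 else 0)" if v: "v \<in> pbasis h0 A f n" for v
  proof (cases "v = h0")
    case True
    then show ?thesis using A(2) h0 by simp
  next
    case False
    with v have "v = A \<or> (\<exists>j<n. v = f j)" by (auto simp: pbasis_def)
    then show ?thesis using False A(3) fg1 superpair_facts(4)[OF SR Ag0] by auto
  qed
  show ?thesis by (rule pvec_x0_free[where b = b and A = A, OF M superpair_facts(2)[OF SR] dual bw])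
qed

theorem mainTheorem11:
  fixes sc :: "complex \<Rightarrow> 'g::ab_group_add \<Rightarrow> 'g"
    and g0 g1 :: "'g set" and br :: "'g \<Rightarrow> 'g \<Rightarrow> 'g" and \<theta> :: "'g \<Rightarrow> 'g"
    and b :: "'g \<Rightarrow> 'g \<Rightarrow> complex" and a :: "'g set"
    and lam :: "'g \<Rightarrow> complex" and A h0 :: 'g and f :: "nat \<Rightarrow> 'g" and n :: nat
  assumes "strongly_reductive_superpair sc g0 g1 br \<theta> b"
    and "even_cartan_even_type sc g0 g1 br \<theta> a"
    and "is_bar_root1 sc g0 g1 br a lam"
    and "A \<in> a" and "\<forall>h\<in>a. b A h = lam h"
    and "b A A = 0"
    and "h0 \<in> a" and "lam h0 = 1" and "b h0 h0 = 0"
    and "inj_on f {..<n}" and "\<not> module.dependent sc (f ` {..<n})"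
    and "module.span sc (f ` {..<n}) = p1lam sc g0 g1 br \<theta> a lam"
  shows "\<forall>z::complex. \<forall>P \<in> Ilam sc br (k1lam sc g0 g1 br \<theta> a lam) h0 A f n.
           \<exists>Q \<in> Ilam sc br (k1lam sc g0 g1 br \<theta> a lam) h0 A f n.
             \<forall>\<mu>. peval 2 Q \<mu> = peval 2 P (\<lambda>i. \<mu> i + z * lam (ebas h0 A i))"
proof (intro allI ballI)
  fix z P
  let ?K1 = "k1lam sc g0 g1 br \<theta> a lam"
  assume "P \<in> Ilam sc br ?K1 h0 A f n"
  then obtain F where F: "F \<in> inv_alg sc br ?K1 h0 A f n" and P: "P = sproj F"
    by (auto simp: Ilam_def)
  have fF: "finite (ssupp F)" using F by (simp add: inv_alg_def spoly_def)
  have gen: "\<And>x w. x \<in> klam_even sc br ?K1 \<union> ?K1 \<Longrightarrow> x0_free (pvec sc h0 A f n (br x w))"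
    by (rule klam_brackets_x0_free[OF assms(1,2,4,5,6,7,8,12)])
  have lam_coords: "(\<lambda>i. \<mu> i + z * lam (ebas h0 A i)) = \<mu>(0 := \<mu> 0 + z)" for \<mu>
    using assms(4,5,6,8) by (force simp: ebas_def)
  show "\<exists>Q \<in> Ilam sc br ?K1 h0 A f n. \<forall>\<mu>. peval 2 Q \<mu> = peval 2 P (\<lambda>i. \<mu> i + z * lam (ebas h0 A i))"
  proof (intro bexI allI)
    show "sproj (x0_shift z F) \<in> Ilam sc br ?K1 h0 A f n"
      using inv_alg_x0_shift[OF gen F] by (simp add: Ilam_def)
    show "peval 2 (sproj (x0_shift z F)) \<mu> = peval 2 P (\<lambda>i. \<mu> i + z * lam (ebas h0 A i))" for \<mu>
      unfolding lam_coords P by (rule peval_sproj_x0_shift[OF fF])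
  qed
qed

end
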